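(* Let $(\mathcal A,\varphi,\mathcal F,\Phi)$ be a ncps of type B$'$ with associated algebra $\mathcal B$ and functional $\varphi$ on $\mathcal B$. For $i\in I$ let $\mathcal A_i$ be a subalgebra of $\mathcal A$ containing $1_{\mathcal A}$, $\mathcal F_i$ a subalgebra of $\mathcal F$, and $\mathcal B_i=\mathcal A_i\langle\mathcal F_i\rangle$ the subalgebra of $\mathcal B$ generated by $\mathcal A_i\oplus\mathcal F_i$. Let $P\in\mathcal F$ with $\Phi(P)\ne0$ and $\mathcal F_P:=\{cP^n: n\in\mathbb N,c\in\mathbb C\}$. Assume that $((\mathcal A_i)_{i\in I},(\mathcal F_i)_{i\in I\sqcup\{P\}})$ is weakly B$'$-free. Then $(\mathcal B_i)_{i\in I}$ are conditionally free with respect to $(\varphi,\varphi_P)$ if and only if $(\mathcal F_i)_{i\in I}$ are Boolean independent with respect to $\varphi_P$.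
   Context: Ncps of type B$'$ $(\mathcal A,\varphi,\mathcal F,\Phi)$: $\mathcal A$ unital complex algebra, $\varphi(1_{\mathcal A})=1$, $\mathcal F$ an algebra which is an $\mathcal A$-bimodule compatible with its multiplication, $\Phi:\mathcal F\to\mathbb C$ linear. $\mathcal B=\mathcal A\oplus\mathcal F$ with product $(a_1,f_1)(a_2,f_2)=(a_1a_2,a_1f_2+f_1a_2+f_1f_2)$, unit $1_{\mathcal A}$; $\varphi(a+f):=\varphi(a)$, $\varphi'(a+f):=\Phi(f)$. For $P\in\mathcal F$ with $\Phi(P)\neq0$, $\varphi_P(b):=\Phi(Pb)/\Phi(P)$ for $b\in\mathcal B$ (note $Pb\in\mathcal F$). Weak B$'$-freeness of $((\mathcal A_i)_{i\in I},(\mathcal F_j)_{j\in J})$: the $\mathcal A_i$ are free w.r.t. $\varphi$ ($\varphi(c_1\cdots c_n)=0$ for alternating indices and centered $c_l\in\mathcal A_{i_l}$), and with $\mathcal A_0$ the algebra generated by all $\mathcal A_i$ and $\mathcal F_0$ the algebra generated by all $\mathcal F_j$, $\Phi(c_0g_1c_1\cdots c_{n-1}g_nc_n)=\varphi(c_0c_n)\prod_{l=1}^{n-1}\varphi(c_l)\Phi(g_1\cdots g_n)$ for all $n\ge1$, $c_l\in\mathcal A_0$, $g_l\in\mathcal F_0$. Subalgebras $(\mathcal C_i)$ (not necessarily unital) are Boolean independent w.r.t. a functional $\psi$ if $\psi(c_1\cdots c_n)=\psi(c_1)\cdots\psi(c_n)$ whenever $i_1\ne i_2\ne\cdots\ne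 i_n$, $c_l\in\mathcal C_{i_l}$. Unital subalgebras $(\mathcal B_i)$ are conditionally free w.r.t. $(\varphi,\psi)$ if they are free w.r.t. $\varphi$ and $\psi(b_1\cdots b_n)=\psi(b_1)\cdots\psi(b_n)$ whenever $n\ge1$, $i_1\ne\cdots\ne i_n$, $b_l\in\mathcal B_{i_l}$, $\varphi(b_l)=0$. *)

theory Defs
  imports Complex_Main
begin

definition cplx_alg :: "(complex \<Rightarrow> 'a::ring \<Rightarrow> 'a) \<Rightarrow> bool" where
  "cplx_alg sm \<longleftrightarrow>
     (\<forall>c x y. sm c (x + y) = sm c x + sm c y) \<and>
     (\<forall>c d x. sm (c + d) x = sm c x + sm d x) \<and>
     (\<forall>c d x. sm (c * d) x = sm c (sm d x)) \<and>
     (\<forall>x. sm 1 x = x) \<and>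
     (\<forall>c x y. sm c (x * y) = sm c x * y) \<and>
     (\<forall>c x y. sm c (x * y) = x * sm c y)"

definition cplx_linear :: "('a::ab_group_add \<Rightarrow> complex) \<Rightarrow> (complex \<Rightarrow> 'a \<Rightarrow> 'a) \<Rightarrow> bool" where
  "cplx_linear \<phi> sm \<longleftrightarrow> (\<forall>x y. \<phi> (x + y) = \<phi> x + \<phi> y) \<and> (\<forall>c x. \<phi> (sm c x) = c * \<phi> x)"

definition subalg :: "'b \<Rightarrow> ('b \<Rightarrow> 'b \<Rightarrow> 'b) \<Rightarrow> (complex \<Rightarrow> 'b \<Rightarrow> 'b) \<Rightarrow> ('b \<Rightarrow> 'b \<Rightarrow> 'b) \<Rightarrow> 'b set \<Rightarrow> bool" where
  "subalg z ad sm mu S \<longleftrightarrow> z \<in> S \<and> (\<forall>x\<in>S. \<forall>y\<in>S. ad x y \<in> S \<and> mu x y \<in> S) \<and> (\<forall>c. \<forall>x\<in>S. sm c x \<in> S)"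

inductive_set gen_alg :: "'b \<Rightarrow> ('b \<Rightarrow> 'b \<Rightarrow> 'b) \<Rightarrow> (complex \<Rightarrow> 'b \<Rightarrow> 'b) \<Rightarrow> ('b \<Rightarrow> 'b \<Rightarrow> 'b) \<Rightarrow> 'b set \<Rightarrow> 'b set"
  for z ad sm mu G where
  gen_base: "x \<in> G \<Longrightarrow> x \<in> gen_alg z ad sm mu G"
| gen_zero: "z \<in> gen_alg z ad sm mu G"
| gen_add: "x \<in> gen_alg z ad sm mu G \<Longrightarrow> y \<in> gen_alg z ad sm mu G \<Longrightarrow> ad x y \<in> gen_alg z ad sm mu G"
| gen_smul: "x \<in> gen_alg z ad sm mu G \<Longrightarrow> sm c x \<in> gen_alg z ad sm mu G"
| gen_mul: "x \<in> gen_alg z ad sm mu G \<Longrightarrow> y \<in> gen_alg z ad sm mu G \<Longrightarrow> mu x y \<in> gen_alg z ad sm mu G"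

text \<open>Freeness, Boolean independence, conditional freeness. A word is a list of
  (index, element) pairs; prodl multiplies a nonempty list of elements.\<close>
definition alternating :: "('i \<times> 'b) list \<Rightarrow> 'i set \<Rightarrow> ('i \<Rightarrow> 'b set) \<Rightarrow> bool" where
  "alternating xs I C \<longleftrightarrow> xs \<noteq> [] \<and> successively (\<noteq>) (map fst xs) \<and>
     (\<forall>(i, c) \<in> set xs. i \<in> I \<and> c \<in> C i)"

definition free_wrt :: "('b list \<Rightarrow> 'b) \<Rightarrow> ('b \<Rightarrow> complex) \<Rightarrow> ('i \<Rightarrow> 'b set) \<Rightarrow> 'i set \<Rightarrow> bool" where
  "free_wrt prodl \<phi> C I \<longleftrightarrow>
     (\<forall>xs. alternating xs I C \<longrightarrow> (\<forall>(i, c) \<in> set xs. \<phi> c = 0) \<longrightarrow> \<phi> (prodl (map snd xs)) = 0)"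

definition boolean_indep :: "('b list \<Rightarrow> 'b) \<Rightarrow> ('b \<Rightarrow> complex) \<Rightarrow> ('i \<Rightarrow> 'b set) \<Rightarrow> 'i set \<Rightarrow> bool" where
  "boolean_indep prodl \<psi> C I \<longleftrightarrow>
     (\<forall>xs. alternating xs I C \<longrightarrow> \<psi> (prodl (map snd xs)) = (\<Prod>x\<leftarrow>xs. \<psi> (snd x)))"

definition cond_free :: "('b list \<Rightarrow> 'b) \<Rightarrow> ('b \<Rightarrow> complex) \<Rightarrow> ('b \<Rightarrow> complex) \<Rightarrow> ('i \<Rightarrow> 'b set) \<Rightarrow> 'i set \<Rightarrow> bool" where
  "cond_free prodl \<phi> \<psi> C I \<longleftrightarrow> free_wrt prodl \<phi> C I \<and>
     (\<forall>xs. alternating xs I C \<longrightarrow> (\<forall>(i, c) \<in> set xs. \<phi> c = 0) \<longrightarrow>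
        \<psi> (prodl (map snd xs)) = (\<Prod>x\<leftarrow>xs. \<psi> (snd x)))"

text \<open>A: type 'a (unital ring) with scalar action smA; F: type 'f (non-unital ring) with scalar
  action smF; left/right actions lA, rA of A on F.\<close>
definition ncps_Bp ::
  "(complex \<Rightarrow> 'a::ring_1 \<Rightarrow> 'a) \<Rightarrow> ('a \<Rightarrow> complex) \<Rightarrow> (complex \<Rightarrow> 'f::ring \<Rightarrow> 'f) \<Rightarrow>
   ('a \<Rightarrow> 'f \<Rightarrow> 'f) \<Rightarrow> ('f \<Rightarrow> 'a \<Rightarrow> 'f) \<Rightarrow> ('f \<Rightarrow> complex) \<Rightarrow> bool" where
  "ncps_Bp smA \<phi> smF lA rA \<Phi> \<longleftrightarrow>
     cplx_alg smA \<and> cplx_alg smF \<and> cplx_linear \<phi> smA \<and> \<phi> 1 = 1 \<and> cplx_linear \<Phi> smF \<and>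
     \<comment> \<open>bimodule\<close>
     (\<forall>a b f. lA (a * b) f = lA a (lA b f)) \<and> (\<forall>f. lA 1 f = f) \<and>
     (\<forall>a b f. rA f (a * b) = rA (rA f a) b) \<and> (\<forall>f. rA f 1 = f) \<and>
     (\<forall>a b f. lA a (rA f b) = rA (lA a f) b) \<and>
     (\<forall>a b f. lA (a + b) f = lA a f + lA b f) \<and> (\<forall>a f g. lA a (f + g) = lA a f + lA a g) \<and>
     (\<forall>a b f. rA f (a + b) = rA f a + rA f b) \<and> (\<forall>a f g. rA (f + g) a = rA f a + rA g a) \<and>
     (\<forall>c a f. lA (smA c a) f = smF c (lA a f) \<and> lA a (smF c f) = smF c (lA a f)) \<and>
     (\<forall>c a f. rA f (smA c a) = smF c (rA f a) \<and> rA (smF c f) a = smF c (rA f a)) \<and>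
     \<comment> \<open>compatibility with the multiplication of F\<close>
     (\<forall>a f g. lA a (f * g) = lA a f * g) \<and>
     (\<forall>a f g. rA (f * g) a = f * rA g a) \<and>
     (\<forall>a f g. rA f a * g = f * lA a g)"

text \<open>The algebra B = A \<oplus> F, elements are pairs (a, f) standing for a + f.\<close>
definition badd :: "'a::ring_1 \<times> 'f::ring \<Rightarrow> 'a \<times> 'f \<Rightarrow> 'a \<times> 'f" where
  "badd x y = (fst x + fst y, snd x + snd y)"

definition bsm :: "(complex \<Rightarrow> 'a::ring_1 \<Rightarrow> 'a) \<Rightarrow> (complex \<Rightarrow> 'f::ring \<Rightarrow> 'f) \<Rightarrow> complex \<Rightarrow> 'a \<times> 'f \<Rightarrow> 'a \<times> 'f" where
  "bsm smA smF c x = (smA c (fst x), smF c (snd x))"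

definition bmul :: "('a::ring_1 \<Rightarrow> 'f::ring \<Rightarrow> 'f) \<Rightarrow> ('f \<Rightarrow> 'a \<Rightarrow> 'f) \<Rightarrow> 'a \<times> 'f \<Rightarrow> 'a \<times> 'f \<Rightarrow> 'a \<times> 'f" where
  "bmul lA rA x y = (fst x * fst y, lA (fst x) (snd y) + rA (snd x) (fst y) + snd x * snd y)"

definition bprod :: "('a::ring_1 \<Rightarrow> 'f::ring \<Rightarrow> 'f) \<Rightarrow> ('f \<Rightarrow> 'a \<Rightarrow> 'f) \<Rightarrow> ('a \<times> 'f) list \<Rightarrow> 'a \<times> 'f" where
  "bprod lA rA xs = foldr (bmul lA rA) xs (1, 0)"

text \<open>\<phi> on B, and \<phi>_P(b) = \<Phi>(P b) / \<Phi>(P).\<close>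
definition phiB :: "('a::ring_1 \<Rightarrow> complex) \<Rightarrow> 'a \<times> 'f::ring \<Rightarrow> complex" where
  "phiB \<phi> x = \<phi> (fst x)"

definition phiP :: "('a::ring_1 \<Rightarrow> 'f::ring \<Rightarrow> 'f) \<Rightarrow> ('f \<Rightarrow> 'a \<Rightarrow> 'f) \<Rightarrow> ('f \<Rightarrow> complex) \<Rightarrow> 'f \<Rightarrow> 'a \<times> 'f \<Rightarrow> complex" where
  "phiP lA rA \<Phi> P x = \<Phi> (snd (bmul lA rA (0, P) x)) / \<Phi> P"

fun fprod :: "'f::ring list \<Rightarrow> 'f" where
  "fprod [] = 0"
| "fprod [x] = x"
| "fprod (x # xs) = x * fprod xs"

text \<open>fpow P n = P^(n+1).\<close>
fun fpow :: "'f::ring \<Rightarrow> nat \<Rightarrow> 'f" where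
  "fpow P 0 = P"
| "fpow P (Suc n) = P * fpow P n"

definition FP :: "(complex \<Rightarrow> 'f::ring \<Rightarrow> 'f) \<Rightarrow> 'f \<Rightarrow> 'f set" where
  "FP smF P = {smF c (fpow P n) | c n. True}"

text \<open>The element g_1 c_1 g_2 c_2 ... g_n c_n of F, for a nonempty list of pairs (g_l, c_l).\<close>
fun gword :: "('f::ring \<Rightarrow> 'a::ring_1 \<Rightarrow> 'f) \<Rightarrow> ('f \<times> 'a) list \<Rightarrow> 'f" where
  "gword rA [] = 0"
| "gword rA [x] = rA (fst x) (snd x)"
| "gword rA (x # xs) = rA (fst x) (snd x) * gword rA xs"

definition weakly_Bp_free ::
  "(complex \<Rightarrow> 'a::ring_1 \<Rightarrow> 'a) \<Rightarrow> ('a \<Rightarrow> complex) \<Rightarrow> (complex \<Rightarrow> 'f::ring \<Rightarrow> 'f) \<Rightarrow>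
   ('a \<Rightarrow> 'f \<Rightarrow> 'f) \<Rightarrow> ('f \<Rightarrow> 'a \<Rightarrow> 'f) \<Rightarrow> ('f \<Rightarrow> complex) \<Rightarrow>
   ('i \<Rightarrow> 'a set) \<Rightarrow> 'i set \<Rightarrow> ('j \<Rightarrow> 'f set) \<Rightarrow> 'j set \<Rightarrow> bool" where
  "weakly_Bp_free smA \<phi> smF lA rA \<Phi> A I F J \<longleftrightarrow>
     free_wrt prod_list \<phi> A I \<and>
     (let A0 = gen_alg 0 (+) smA (*) (insert 1 (\<Union>i\<in>I. A i));
          F0 = gen_alg 0 (+) smF (*) (\<Union>j\<in>J. F j)
      in \<forall>c0 gs. gs \<noteq> [] \<longrightarrow> c0 \<in> A0 \<longrightarrow> (\<forall>x\<in>set gs. fst x \<in> F0 \<and> snd x \<in> A0) \<longrightarrow>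
           \<Phi> (lA c0 (gword rA gs)) =
             \<phi> (c0 * snd (last gs)) * (\<Prod>x\<leftarrow>butlast gs. \<phi> (snd x)) * \<Phi> (fprod (map fst gs)))"

end

theory Submission
  imports Defs
begin

text \<open>Every element of B i is a + f with a in A i and f a linear combination of words
  a0 g1 c1 ... gn cn with letters gl in F i and coefficients in A i. Since \<phi> only sees the
  A-part, freeness of the B i w.r.t. \<phi> is that of the A i. For an alternating product
  b1 ... bn of such elements with \<phi>-centered A-parts, expand P b1 ... bn into words and evaluate
  each by weak B'-freeness: a term that uses the A-part of some bk contains a \<phi>-value of a
  centered alternating product and vanishes by freeness of the A i, while in the remaining terms
  every coefficient may be replaced by its \<phi>-value. Hence \<phi>_P (b1 ... bn) = \<phi>_P (e1 ... en),
  where ek in F i is obtained from bk by dropping its A-part and replacing the coefficients of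
  its words by their \<phi>-values, and Boolean independence of the F i w.r.t. \<phi>_P yields
  conditional freeness. The converse is the special case of factors from the F i.\<close>

lemma alternating_Cons:
  "alternating xs I C \<Longrightarrow> i \<in> I \<Longrightarrow> c \<in> C i \<Longrightarrow> i \<noteq> fst (hd xs) \<Longrightarrow>
    alternating ((i, c) # xs) I C"
  unfolding alternating_def by (cases xs) auto

lemma alternating_snoc:
  "alternating xs I C \<Longrightarrow> i \<in> I \<Longrightarrow> c \<in> C i \<Longrightarrow> i \<noteq> fst (last xs) \<Longrightarrow>
    alternating (xs @ [(i, c)]) I C"
  unfolding alternating_def by (auto simp: successively_append_iff last_map)

locale free_unital_family =
  fixes smA :: "complex \<Rightarrow> 'a::ring_1 \<Rightarrow> 'a" and \<phi> :: "'a \<Rightarrow> complex"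
    and I :: "'i set" and A :: "'i \<Rightarrow> 'a set"
  assumes smA_alg: "cplx_alg smA"
    and \<phi>_linear: "cplx_linear \<phi> smA"
    and \<phi>_one: "\<phi> 1 = 1"
    and unital_subalgebras: "\<And>i. i \<in> I \<Longrightarrow> subalg 0 (+) smA (*) (A i) \<and> 1 \<in> A i"
    and free: "free_wrt prod_list \<phi> A I"
begin

abbreviation centered :: "'i \<Rightarrow> 'a set" where
  "centered i \<equiv> {a \<in> A i. \<phi> a = 0}"

lemma \<phi>_add: "\<phi> (x + y) = \<phi> x + \<phi> y"
  and \<phi>_smA: "\<phi> (smA c x) = c * \<phi> x"
  using \<phi>_linear unfolding cplx_linear_def by auto

lemma \<phi>_diff: "\<phi> (x - y) = \<phi> x - \<phi> y"
  using \<phi>_add[of "x - y" y] by simp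

lemma \<phi>_zero: "\<phi> 0 = 0"
  using \<phi>_diff[of 0 0] by simp

lemma smA_mult_left: "smA c (x * y) = smA c x * y"
  and smA_mult_right: "smA c (x * y) = x * smA c y"
  using smA_alg unfolding cplx_alg_def by auto

lemma smA_one_mult: "smA c 1 * x = smA c x"
  and mult_smA_one: "x * smA c 1 = smA c x"
  using smA_mult_left[of c 1 x] smA_mult_right[of c x 1] by simp_all

lemma smA_minus_one: "smA (-1) x = - x"
proof -
  have "smA (-1) x + smA 1 x = smA 0 x" "smA 0 x + smA 0 x = smA 0 x" "smA 1 x = x"
    using smA_alg unfolding cplx_alg_def by (metis add.left_inverse, metis add_0, blast)
  then show ?thesis
    by (simp add: add_eq_0_iff2)
qed

lemma A_closed:
  assumes "i \<in> I"
  shows "0 \<in> A i" "1 \<in> A i" "x \<in> A i \<Longrightarrow> y \<in> A i \<Longrightarrow> x + y \<in> A i"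
    "x \<in> A i \<Longrightarrow> y \<in> A i \<Longrightarrow> x * y \<in> A i" "x \<in> A i \<Longrightarrow> smA c x \<in> A i"
    "x \<in> A i \<Longrightarrow> y \<in> A i \<Longrightarrow> x - y \<in> A i"
proof -
  show "0 \<in> A i" "1 \<in> A i" "x \<in> A i \<Longrightarrow> y \<in> A i \<Longrightarrow> x + y \<in> A i"
    "x \<in> A i \<Longrightarrow> y \<in> A i \<Longrightarrow> x * y \<in> A i" "x \<in> A i \<Longrightarrow> smA c x \<in> A i"
    using unital_subalgebras[OF assms] unfolding subalg_def by auto
  assume "x \<in> A i" "y \<in> A i"
  then have "x + smA (-1) y \<in> A i"
    using unital_subalgebras[OF assms] unfolding subalg_def by blast
  then show "x - y \<in> A i"
    by (simp add: smA_minus_one)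
qed

lemma centering: "i \<in> I \<Longrightarrow> x \<in> A i \<Longrightarrow> x - smA (\<phi> x) 1 \<in> centered i"
  using A_closed[of i] by (simp add: \<phi>_diff \<phi>_smA \<phi>_one)

lemma \<phi>_alternating_centered: "alternating ch I centered \<Longrightarrow> \<phi> (prod_list (map snd ch)) = 0"
  using free unfolding free_wrt_def alternating_def by fastforce

lemma \<phi>_alternating_times:
  assumes ch: "alternating ch I centered" and c: "j \<in> I" "j \<noteq> fst (last ch)" "c \<in> A j"
  shows "\<phi> (prod_list (map snd ch) * c) = 0"
proof -
  define c\<^sub>0 where "c\<^sub>0 = c - smA (\<phi> c) 1"
  have "prod_list (map snd ch) * c = smA (\<phi> c) (prod_list (map snd ch)) + prod_list (map snd (ch @ [(j, c\<^sub>0)]))"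
    by (simp add: c\<^sub>0_def algebra_simps mult_smA_one)
  moreover have "alternating (ch @ [(j, c\<^sub>0)]) I centered"
    using alternating_snoc[OF ch] c centering unfolding c\<^sub>0_def by blast
  ultimately show ?thesis
    using \<phi>_alternating_centered[OF ch] \<phi>_alternating_centered[of "ch @ [(j, c\<^sub>0)]"]
    by (simp add: \<phi>_add \<phi>_smA)
qed

lemma \<phi>_times_alternating_times:
  assumes ch: "alternating ch I centered" and x: "i \<in> I" "i \<noteq> fst (hd ch)" "x \<in> A i"
    and c: "j \<in> I" "j \<noteq> fst (last ch)" "c \<in> A j"
  shows "\<phi> (x * prod_list (map snd ch) * c) = 0"
proof -
  define x\<^sub>0 where "x\<^sub>0 = x - smA (\<phi> x) 1"
  have "x * prod_list (map snd ch) * c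
      = smA (\<phi> x) (prod_list (map snd ch) * c) + prod_list (map snd ((i, x\<^sub>0) # ch)) * c"
    by (simp add: x\<^sub>0_def algebra_simps smA_one_mult smA_mult_left)
  moreover have "alternating ((i, x\<^sub>0) # ch) I centered"
    using alternating_Cons[OF ch] x centering unfolding x\<^sub>0_def by blast
  moreover have "fst (last ((i, x\<^sub>0) # ch)) = fst (last ch)"
    using ch unfolding alternating_def by simp
  ultimately show ?thesis
    using \<phi>_alternating_times[OF ch c] \<phi>_alternating_times[of "(i, x\<^sub>0) # ch" j c] c
    by (simp add: \<phi>_add \<phi>_smA mult.assoc)
qed

lemma \<phi>_mult_distinct:
  assumes "i \<in> I" "j \<in> I" "i \<noteq> j" "x \<in> A i" "c \<in> A j"
  shows "\<phi> (x * c) = \<phi> x * \<phi> c"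
proof -
  define x\<^sub>0 where "x\<^sub>0 = x - smA (\<phi> x) 1"
  have "x * c = smA (\<phi> x) c + prod_list (map snd [(i, x\<^sub>0)]) * c"
    by (simp add: x\<^sub>0_def algebra_simps smA_one_mult)
  moreover have "alternating [(i, x\<^sub>0)] I centered"
    using assms centering unfolding x\<^sub>0_def alternating_def by simp
  ultimately show ?thesis
    using \<phi>_alternating_times[of "[(i, x\<^sub>0)]" j c] assms by (simp add: \<phi>_add \<phi>_smA)
qed

text \<open>The condition on the last coefficient y of a word that is about to be multiplied by an
  element of the k-th algebra: y behaves as if it were free from every centered alternating
  product starting in A k.\<close>
definition free_before :: "'i \<Rightarrow> 'a \<Rightarrow> bool" where
  "free_before k y \<longleftrightarrow> (\<forall>c\<in>A k. \<phi> (y * c) = \<phi> y * \<phi> c) \<and>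
     (\<forall>ch j c. alternating ch I centered \<longrightarrow> fst (hd ch) = k \<longrightarrow>
        j \<in> I \<longrightarrow> j \<noteq> fst (last ch) \<longrightarrow> c \<in> A j \<longrightarrow> \<phi> (y * prod_list (map snd ch) * c) = 0)"

lemma free_beforeD: "free_before k y \<Longrightarrow> c \<in> A k \<Longrightarrow> \<phi> (y * c) = \<phi> y * \<phi> c"
  unfolding free_before_def by blast

lemma free_before_one: "free_before k 1"
  unfolding free_before_def using \<phi>_alternating_times by (simp add: \<phi>_one)

lemma free_before_distinct:
  assumes "i \<in> I" "k \<in> I" "k \<noteq> i" "y \<in> A i"
  shows "free_before k y"
  unfolding free_before_def
  using assms \<phi>_mult_distinct[of i k y] \<phi>_times_alternating_times[of _ i y] by auto

lemma free_before_step: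
  assumes y: "free_before k y" and a: "k \<in> I" "a \<in> centered k" and k': "k' \<in> I" "k' \<noteq> k"
  shows "free_before k' (y * a)"
  unfolding free_before_def
proof (intro conjI ballI allI impI)
  have single: "alternating [(k, a)] I centered"
    using a unfolding alternating_def by simp
  fix c assume "c \<in> A k'"
  then have "\<phi> (y * prod_list (map snd [(k, a)]) * c) = 0"
    using y[unfolded free_before_def, THEN conjunct2, rule_format, OF single] k' by simp
  moreover have "\<phi> (y * a) = 0"
    using free_beforeD[OF y] a by simp
  ultimately show "\<phi> (y * a * c) = \<phi> (y * a) * \<phi> c"
    by simp
next
  fix ch j c
  assume ch: "alternating ch I centered" "fst (hd ch) = k'"
    and c: "j \<in> I" "j \<noteq> fst (last ch)" "c \<in> A j"
  have "alternating ((k, a) # ch) I centered" "fst (last ((k, a) # ch)) = fst (last ch)"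
    using alternating_Cons[OF ch(1) a] ch k' unfolding alternating_def by auto
  then have "\<phi> (y * prod_list (map snd ((k, a) # ch)) * c) = 0"
    using y[unfolded free_before_def, THEN conjunct2, rule_format, of "(k, a) # ch" j c] c by simp
  then show "\<phi> (y * a * prod_list (map snd ch) * c) = 0"
    by (simp add: mult.assoc)
qed

end

lemma gword_Cons: "xs \<noteq> [] \<Longrightarrow> gword rA (x # xs) = rA (fst x) (snd x) * gword rA xs"
  by (cases xs) auto

lemma gword_append: "xs \<noteq> [] \<Longrightarrow> ys \<noteq> [] \<Longrightarrow> gword rA (xs @ ys) = gword rA xs * gword rA ys"
  by (induction xs rule: induct_list012) (simp_all add: gword_Cons mult.assoc)

lemma fprod_Cons: "xs \<noteq> [] \<Longrightarrow> fprod (x # xs) = x * fprod xs"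
  by (cases xs) auto

lemma fprod_append: "xs \<noteq> [] \<Longrightarrow> ys \<noteq> [] \<Longrightarrow> fprod (xs @ ys) = fprod xs * fprod ys"
  by (induction xs rule: induct_list012) (simp_all add: fprod_Cons mult.assoc)

lemma fprod_middle:
  "xs \<noteq> [] \<Longrightarrow> fprod (xs @ e # ys) = (if ys = [] then fprod xs * e else fprod xs * e * fprod ys)"
  by (simp add: fprod_append fprod_Cons mult.assoc)

lemma fprod_flatten_middle:
  "xs \<noteq> [] \<Longrightarrow> zs \<noteq> [] \<Longrightarrow> fprod (xs @ fprod zs # ys) = fprod (xs @ zs @ ys)"
  by (cases "ys = []") (simp_all add: fprod_middle fprod_append fprod_Cons mult.assoc)

definition scale_last :: "('f \<times> 'a::times) list \<Rightarrow> 'a \<Rightarrow> ('f \<times> 'a) list" where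
  "scale_last gs a = butlast gs @ [(fst (last gs), snd (last gs) * a)]"

lemma scale_last_Cons: "gs \<noteq> [] \<Longrightarrow> scale_last (x # gs) a = x # scale_last gs a"
  and scale_last_single: "scale_last [x] a = [(fst x, snd x * a)]"
  by (simp_all add: scale_last_def)

lemma scale_last_not_Nil: "scale_last gs a \<noteq> []"
  by (simp add: scale_last_def)

lemma map_fst_scale_last: "gs \<noteq> [] \<Longrightarrow> map fst (scale_last gs a) = map fst gs"
  by (induction gs rule: induct_list012) (simp_all add: scale_last_def)

lemma prod_list_butlast_last:
  "xs \<noteq> [] \<Longrightarrow> (\<Prod>x\<leftarrow>xs. f x) = (\<Prod>x\<leftarrow>butlast xs. f x) * f (last xs)"
  by (induction xs rule: induct_list012) (simp_all add: mult.assoc)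

lemma scale_last_in:
  assumes "\<forall>x\<in>set gs. fst x \<in> G \<and> snd x \<in> C" "gs \<noteq> []" "snd (last gs) * a \<in> C"
  shows "\<forall>x\<in>set (scale_last gs a). fst x \<in> G \<and> snd x \<in> C"
  using assms in_set_butlastD[of _ gs] last_in_set[OF assms(2)] unfolding scale_last_def by auto

lemma prod_scale_last:
  "gs \<noteq> [] \<Longrightarrow>
    (\<Prod>x\<leftarrow>scale_last gs a. f (snd x)) = (\<Prod>x\<leftarrow>butlast gs. f (snd x)) * f (snd (last gs) * a)"
  by (simp add: scale_last_def)

text \<open>A word (a0, [(g1, c1), ..., (gn, cn)]) stands for the element a0 g1 c1 ... gn cn of F.\<close>
type_synonym ('a, 'f) word = "'a \<times> ('f \<times> 'a) list"

locale ncps_Bp_space =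
  fixes smA :: "complex \<Rightarrow> 'a::ring_1 \<Rightarrow> 'a" and \<phi> :: "'a \<Rightarrow> complex"
    and smF :: "complex \<Rightarrow> 'f::ring \<Rightarrow> 'f" and lA :: "'a \<Rightarrow> 'f \<Rightarrow> 'f" and rA :: "'f \<Rightarrow> 'a \<Rightarrow> 'f"
    and \<Phi> :: "'f \<Rightarrow> complex"
  assumes ncps: "ncps_Bp smA \<phi> smF lA rA \<Phi>"
begin

lemma smF_add: "smF c (x + y) = smF c x + smF c y"
  and smF_mult_left: "smF c (x * y) = smF c x * y"
  and smF_mult_right: "smF c (x * y) = x * smF c y"
  and \<Phi>_add: "\<Phi> (f + g) = \<Phi> f + \<Phi> g"
  and \<Phi>_smF: "\<Phi> (smF c f) = c * \<Phi> f"
  using ncps unfolding ncps_Bp_def cplx_alg_def cplx_linear_def by auto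

lemma lA_mult: "lA (a * b) f = lA a (lA b f)"
  and lA_one: "lA 1 f = f"
  and rA_mult: "rA f (a * b) = rA (rA f a) b"
  and rA_one: "rA f 1 = f"
  and lA_rA: "lA a (rA f b) = rA (lA a f) b"
  and lA_add_left: "lA (a + b) f = lA a f + lA b f"
  and lA_add_right: "lA a (f + g) = lA a f + lA a g"
  and rA_add_right: "rA f (a + b) = rA f a + rA f b"
  and rA_add_left: "rA (f + g) a = rA f a + rA g a"
  and lA_smA: "lA (smA c a) f = smF c (lA a f)"
  and lA_mult_F: "lA a (f * g) = lA a f * g"
  and rA_mult_F: "rA (f * g) a = f * rA g a"
  and rA_lA: "rA f a * g = f * lA a g"
  using ncps unfolding ncps_Bp_def by auto

lemma lA_zero_left [simp]: "lA 0 f = 0"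
  and lA_zero [simp]: "lA a 0 = 0"
  and rA_zero_left [simp]: "rA 0 a = 0"
  and rA_zero_right [simp]: "rA f 0 = 0"
  and \<Phi>_zero [simp]: "\<Phi> 0 = 0"
  and smF_zero [simp]: "smF c 0 = 0"
  using lA_add_left[of 0 0 f] lA_add_right[of a 0 0] rA_add_left[of 0 0 a] rA_add_right[of f 0 0]
    \<Phi>_add[of 0 0] smF_add[of c 0 0]
  by simp_all

lemma bmul_assoc: "bmul lA rA (bmul lA rA x y) z = bmul lA rA x (bmul lA rA y z)"
  by (simp add: bmul_def lA_add_right rA_add_left lA_mult rA_mult lA_rA lA_mult_F rA_mult_F rA_lA
      distrib_left distrib_right mult.assoc add_ac)

lemma fst_bprod: "fst (bprod lA rA xs) = prod_list (map fst xs)"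
  by (induction xs) (auto simp: bprod_def bmul_def)

lemma bprod_map_zero: "es \<noteq> [] \<Longrightarrow> bprod lA rA (map (\<lambda>e. (0, e)) es) = (0, fprod es)"
  by (induction es rule: induct_list012) (auto simp: bprod_def bmul_def rA_one)

text \<open>\<Phi>_times u b is \<Phi>'(u b) for u in F, so that \<phi>_P b = \<Phi>_times P b / \<Phi> P.\<close>
definition \<Phi>_times :: "'f \<Rightarrow> 'a \<times> 'f \<Rightarrow> complex" where
  "\<Phi>_times u b = \<Phi> (snd (bmul lA rA (0, u) b))"

lemma \<Phi>_times_add: "\<Phi>_times (u + v) b = \<Phi>_times u b + \<Phi>_times v b"
  by (simp add: \<Phi>_times_def bmul_def rA_add_left distrib_right \<Phi>_add[symmetric] add_ac)

lemma \<Phi>_times_sum_list: "\<Phi>_times (sum_list us) b = (\<Sum>u\<leftarrow>us. \<Phi>_times u b)"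
  by (induction us) (simp_all add: \<Phi>_times_add, simp add: \<Phi>_times_def bmul_def)

lemma \<Phi>_times_bmul: "\<Phi>_times u (bmul lA rA (a, f) b) = \<Phi>_times (rA u a + u * f) b"
  unfolding \<Phi>_times_def bmul_assoc[symmetric] by (simp add: bmul_def)

lemma \<Phi>_times_unit: "\<Phi>_times u (1, 0) = \<Phi> u"
  by (simp add: \<Phi>_times_def bmul_def rA_one)

lemma \<Phi>_times_F: "\<Phi>_times u (0, e) = \<Phi> (u * e)"
  by (simp add: \<Phi>_times_def bmul_def)

lemma rA_gword: "gs \<noteq> [] \<Longrightarrow> rA (gword rA gs) a = gword rA (scale_last gs a)"
  by (induction gs rule: induct_list012)
    (simp_all add: scale_last_single scale_last_Cons scale_last_not_Nil gword_Cons rA_mult rA_mult_F)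

lemma gword_mult_lA:
  assumes "gs \<noteq> []" "gm \<noteq> []"
  shows "gword rA gs * lA a (gword rA gm) = gword rA (scale_last gs a @ gm)"
proof -
  have "gword rA gs * lA a (gword rA gm) = rA (gword rA gs) a * gword rA gm"
    by (simp add: rA_lA)
  then show ?thesis
    using assms by (simp add: rA_gword gword_append scale_last_not_Nil)
qed

definition word_val :: "('a, 'f) word \<Rightarrow> 'f" where
  "word_val w = lA (fst w) (gword rA (snd w))"

definition words_val :: "('a, 'f) word list \<Rightarrow> 'f" where
  "words_val ws = (\<Sum>w\<leftarrow>ws. word_val w)"

definition word_proj :: "('a, 'f) word \<Rightarrow> 'f" where
  "word_proj w = smF (\<phi> (fst w) * (\<Prod>x\<leftarrow>snd w. \<phi> (snd x))) (fprod (map fst (snd w)))"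

definition words_proj :: "('a, 'f) word list \<Rightarrow> 'f" where
  "words_proj ws = (\<Sum>w\<leftarrow>ws. word_proj w)"

lemma lA_words_val: "lA a (words_val ws) = words_val (map (\<lambda>w. (a * fst w, snd w)) ws)"
  by (induction ws) (simp_all add: words_val_def word_val_def lA_add_right lA_mult)

lemma smF_words_val: "smF c (words_val ws) = words_val (map (\<lambda>w. (smA c (fst w), snd w)) ws)"
  by (induction ws) (simp_all add: words_val_def word_val_def smF_add lA_smA)

lemma rA_words_val:
  "\<forall>w\<in>set ws. snd w \<noteq> [] \<Longrightarrow>
    rA (words_val ws) a = words_val (map (\<lambda>w. (fst w, scale_last (snd w) a)) ws)"
  by (induction ws) (simp_all add: words_val_def word_val_def rA_add_left lA_rA[symmetric] rA_gword)

definition word_mult :: "('a, 'f) word \<Rightarrow> ('a, 'f) word \<Rightarrow> ('a, 'f) word" where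
  "word_mult w w' = (fst w, scale_last (snd w) (fst w') @ snd w')"

lemma word_val_mult:
  "snd w \<noteq> [] \<Longrightarrow> snd w' \<noteq> [] \<Longrightarrow> word_val w * word_val w' = word_val (word_mult w w')"
  by (simp add: word_val_def word_mult_def lA_mult_F[symmetric] gword_mult_lA)

lemma words_val_mult:
  assumes "\<forall>w\<in>set ws. snd w \<noteq> []" "\<forall>w\<in>set ws'. snd w \<noteq> []"
  shows "words_val ws * words_val ws' = words_val (concat (map (\<lambda>w. map (word_mult w) ws') ws))"
proof -
  have "word_val w * words_val ws' = words_val (map (word_mult w) ws')" if "snd w \<noteq> []" for w
    using assms(2) that by (induction ws') (simp_all add: words_val_def distrib_left word_val_mult)
  then show ?thesis
    using assms(1) by (induction ws) (simp_all add: words_val_def distrib_right)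
qed

lemma \<Phi>_times_gword_bmul:
  assumes "gs \<noteq> []" "\<forall>w\<in>set ws. snd w \<noteq> []"
  shows "\<Phi>_times (gword rA gs) (bmul lA rA (a, words_val ws) b) =
    \<Phi>_times (gword rA (scale_last gs a)) b +
    (\<Sum>w\<leftarrow>ws. \<Phi>_times (gword rA (scale_last gs (fst w) @ snd w)) b)"
proof -
  have "gword rA gs * words_val ws = (\<Sum>w\<leftarrow>ws. gword rA (scale_last gs (fst w) @ snd w))"
    using assms by (simp add: words_val_def word_val_def sum_list_const_mult[symmetric] gword_mult_lA
        cong: map_cong)
  then show ?thesis
    using assms(1) by (simp add: \<Phi>_times_bmul \<Phi>_times_add \<Phi>_times_sum_list rA_gword comp_def)
qed

lemma \<Phi>_fprod_words_proj:
  assumes "xs \<noteq> []" "\<forall>w\<in>set ws. snd w \<noteq> []"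
  shows "\<Phi> (fprod (xs @ words_proj ws # ys)) =
    (\<Sum>w\<leftarrow>ws. \<phi> (fst w) * (\<Prod>x\<leftarrow>snd w. \<phi> (snd x)) * \<Phi> (fprod (xs @ map fst (snd w) @ ys)))"
  using assms(2)
proof (induction ws)
  case Nil
  then show ?case
    using assms(1) by (simp add: words_proj_def fprod_middle)
next
  case (Cons w ws)
  have "\<Phi> (fprod (xs @ (word_proj w + words_proj ws) # ys)) =
      \<Phi> (fprod (xs @ word_proj w # ys)) + \<Phi> (fprod (xs @ words_proj ws # ys))"
    using assms(1) by (simp add: fprod_middle distrib_left distrib_right \<Phi>_add)
  moreover have "\<Phi> (fprod (xs @ word_proj w # ys)) =
      \<phi> (fst w) * (\<Prod>x\<leftarrow>snd w. \<phi> (snd x)) * \<Phi> (fprod (xs @ map fst (snd w) @ ys))"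
    using assms(1) Cons.prems fprod_flatten_middle[OF assms(1), of "map fst (snd w)" ys, symmetric]
    by (simp add: word_proj_def fprod_middle smF_mult_left[symmetric] smF_mult_right[symmetric] \<Phi>_smF)
  ultimately show ?case
    using Cons by (simp add: words_proj_def)
qed

end

locale Bp_free_setting = ncps_Bp_space smA \<phi> smF lA rA \<Phi>
  for smA :: "complex \<Rightarrow> 'a::ring_1 \<Rightarrow> 'a" and \<phi> :: "'a \<Rightarrow> complex"
    and smF :: "complex \<Rightarrow> 'f::ring \<Rightarrow> 'f" and lA :: "'a \<Rightarrow> 'f \<Rightarrow> 'f" and rA :: "'f \<Rightarrow> 'a \<Rightarrow> 'f"
    and \<Phi> :: "'f \<Rightarrow> complex" +
  fixes I :: "'i set" and A :: "'i \<Rightarrow> 'a set" and F :: "'i \<Rightarrow> 'f set" and P :: 'f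
  assumes subalgebras_A: "\<And>i. i \<in> I \<Longrightarrow> subalg 0 (+) smA (*) (A i) \<and> 1 \<in> A i"
    and subalgebras_F: "\<And>i. i \<in> I \<Longrightarrow> subalg 0 (+) smF (*) (F i)"
    and weakly_free: "weakly_Bp_free smA \<phi> smF lA rA \<Phi> A I
                  (\<lambda>j. case j of None \<Rightarrow> FP smF P | Some i \<Rightarrow> F i) (insert None (Some ` I))"
begin

sublocale free_unital_family smA \<phi> I A
  using ncps subalgebras_A weakly_free unfolding ncps_Bp_def weakly_Bp_free_def
  by unfold_locales auto

abbreviation Balg :: "'i \<Rightarrow> ('a \<times> 'f) set" where
  "Balg i \<equiv> gen_alg (0, 0) badd (bsm smA smF) (bmul lA rA) {(a, f). a \<in> A i \<and> f \<in> F i}"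

lemma F_closed:
  assumes "i \<in> I"
  shows "0 \<in> F i" "x \<in> F i \<Longrightarrow> y \<in> F i \<Longrightarrow> x + y \<in> F i"
    "x \<in> F i \<Longrightarrow> y \<in> F i \<Longrightarrow> x * y \<in> F i" "x \<in> F i \<Longrightarrow> smF c x \<in> F i"
  using subalgebras_F[OF assms] unfolding subalg_def by auto

definition word_in :: "'i \<Rightarrow> ('a, 'f) word \<Rightarrow> bool" where
  "word_in i w \<longleftrightarrow>
     fst w \<in> A i \<and> snd w \<noteq> [] \<and> (\<forall>x\<in>set (snd w). fst x \<in> F i \<and> snd x \<in> A i)"

definition word_span :: "'i \<Rightarrow> 'f set" where
  "word_span i = {words_val ws | ws. \<forall>w\<in>set ws. word_in i w}"

lemma word_in_scale_last:
  assumes "i \<in> I" "word_in i w" "a \<in> A i"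
  shows "\<forall>x\<in>set (scale_last (snd w) a). fst x \<in> F i \<and> snd x \<in> A i"
  using assms A_closed(4)[OF assms(1)] last_in_set[of "snd w"]
  by (intro scale_last_in) (auto simp: word_in_def)

lemma word_span_F: "i \<in> I \<Longrightarrow> f \<in> F i \<Longrightarrow> f \<in> word_span i"
  unfolding word_span_def
  by (rule CollectI, rule exI[of _ "[(1, [(f, 1)])]"])
    (simp add: A_closed word_in_def words_val_def word_val_def lA_one rA_one)

lemma word_span_zero: "0 \<in> word_span i"
  unfolding word_span_def by (rule CollectI, rule exI[of _ "[]"]) (simp add: words_val_def)

lemma word_span_add:
  assumes "f \<in> word_span i" "g \<in> word_span i"
  shows "f + g \<in> word_span i"
proof -
  obtain ws ws' where "\<forall>w\<in>set ws. word_in i w" "f = words_val ws"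
    and "\<forall>w\<in>set ws'. word_in i w" "g = words_val ws'"
    using assms unfolding word_span_def by auto
  then have "\<forall>w\<in>set (ws @ ws'). word_in i w" "f + g = words_val (ws @ ws')"
    by (auto simp: words_val_def)
  then show ?thesis
    unfolding word_span_def by blast
qed

lemma word_span_smF:
  assumes "i \<in> I" "f \<in> word_span i"
  shows "smF c f \<in> word_span i"
proof -
  obtain ws where ws: "\<forall>w\<in>set ws. word_in i w" "f = words_val ws"
    using assms(2) unfolding word_span_def by auto
  then have "\<forall>w\<in>set (map (\<lambda>w. (smA c (fst w), snd w)) ws). word_in i w"
    using A_closed(5)[OF assms(1)] by (auto simp: word_in_def)
  then show ?thesis
    using ws(2) smF_words_val unfolding word_span_def by blast
qed

lemma word_span_lA:
  assumes "i \<in> I" "a \<in> A i" "f \<in> word_span i"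
  shows "lA a f \<in> word_span i"
proof -
  obtain ws where ws: "\<forall>w\<in>set ws. word_in i w" "f = words_val ws"
    using assms(3) unfolding word_span_def by auto
  then have "\<forall>w\<in>set (map (\<lambda>w. (a * fst w, snd w)) ws). word_in i w"
    using A_closed(4)[OF assms(1,2)] by (auto simp: word_in_def)
  then show ?thesis
    using ws(2) lA_words_val unfolding word_span_def by blast
qed

lemma word_span_rA:
  assumes "i \<in> I" "a \<in> A i" "f \<in> word_span i"
  shows "rA f a \<in> word_span i"
proof -
  obtain ws where ws: "\<forall>w\<in>set ws. word_in i w" "f = words_val ws"
    using assms(3) unfolding word_span_def by auto
  then have "rA f a = words_val (map (\<lambda>w. (fst w, scale_last (snd w) a)) ws)"
    by (simp add: rA_words_val word_in_def)
  moreover have "word_in i (fst w, scale_last (snd w) a)" if "word_in i w" for w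
    using word_in_scale_last[OF assms(1) that assms(2)] that scale_last_not_Nil
    unfolding word_in_def by simp
  then have "\<forall>w\<in>set (map (\<lambda>w. (fst w, scale_last (snd w) a)) ws). word_in i w"
    using ws(1) by simp
  ultimately show ?thesis
    unfolding word_span_def by blast
qed

lemma word_span_mult:
  assumes "i \<in> I" "f \<in> word_span i" "g \<in> word_span i"
  shows "f * g \<in> word_span i"
proof -
  obtain ws ws' where ws: "\<forall>w\<in>set ws. word_in i w" "f = words_val ws"
    and ws': "\<forall>w\<in>set ws'. word_in i w" "g = words_val ws'"
    using assms(2,3) unfolding word_span_def by auto
  then have "f * g = words_val (concat (map (\<lambda>w. map (word_mult w) ws') ws))"
    by (simp add: words_val_mult word_in_def)
  moreover have "word_in i (word_mult w w')" if "word_in i w" "word_in i w'" for w w'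
    using that word_in_scale_last[OF assms(1) that(1)] unfolding word_in_def word_mult_def by auto
  then have "\<forall>w\<in>set (concat (map (\<lambda>w. map (word_mult w) ws') ws)). word_in i w"
    using ws(1) ws'(1) by auto
  ultimately show ?thesis
    unfolding word_span_def by blast
qed

lemma Balg_decomp:
  assumes "b \<in> Balg i" "i \<in> I"
  shows "fst b \<in> A i \<and> snd b \<in> word_span i"
  using assms(1)
proof (induction rule: gen_alg.induct)
  case (gen_base x)
  then show ?case using word_span_F[OF assms(2)] by auto
next
  case gen_zero
  then show ?case using word_span_zero A_closed[OF assms(2)] by simp
next
  case (gen_add x y)
  then show ?case using word_span_add A_closed[OF assms(2)] by (simp add: badd_def)
next
  case (gen_smul x c)
  then show ?case using word_span_smF[OF assms(2)] A_closed[OF assms(2)] by (simp add: bsm_def)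
next
  case (gen_mul x y)
  then have "lA (fst x) (snd y) \<in> word_span i" "rA (snd x) (fst y) \<in> word_span i"
    "snd x * snd y \<in> word_span i"
    using word_span_mult[OF assms(2)] word_span_lA[OF assms(2)] word_span_rA[OF assms(2)] by simp_all
  then have "lA (fst x) (snd y) + rA (snd x) (fst y) + snd x * snd y \<in> word_span i"
    by (intro word_span_add)
  then show ?case
    using gen_mul A_closed(4)[OF assms(2)] by (simp add: bmul_def)
qed

lemma fprod_in_F: "i \<in> I \<Longrightarrow> \<forall>x\<in>set xs. x \<in> F i \<Longrightarrow> fprod xs \<in> F i"
  by (induction xs rule: fprod.induct) (simp_all add: F_closed)

lemma words_proj_in_F:
  assumes "i \<in> I" "\<forall>w\<in>set ws. word_in i w"
  shows "words_proj ws \<in> F i"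
  using assms(2)
proof (induction ws)
  case (Cons w ws)
  then have "word_proj w \<in> F i"
    using F_closed(4)[OF assms(1)] fprod_in_F[OF assms(1)] by (simp add: word_proj_def word_in_def)
  then show ?case
    using Cons F_closed(2)[OF assms(1)] by (simp add: words_proj_def)
qed (simp add: words_proj_def F_closed[OF assms(1)])

abbreviation A\<^sub>0 :: "'a set" where
  "A\<^sub>0 \<equiv> gen_alg 0 (+) smA (*) (insert 1 (\<Union>i\<in>I. A i))"

abbreviation F\<^sub>0 :: "'f set" where
  "F\<^sub>0 \<equiv> gen_alg 0 (+) smF (*)
     (\<Union>j\<in>insert None (Some ` I). case j of None \<Rightarrow> FP smF P | Some i \<Rightarrow> F i)"

lemma one_in_A\<^sub>0: "1 \<in> A\<^sub>0"
  by (rule gen_base) simp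

lemma A_sub_A\<^sub>0: "i \<in> I \<Longrightarrow> a \<in> A i \<Longrightarrow> a \<in> A\<^sub>0"
  by (rule gen_base) auto

lemma F_sub_F\<^sub>0: "i \<in> I \<Longrightarrow> f \<in> F i \<Longrightarrow> f \<in> F\<^sub>0"
  by (rule gen_base) auto

lemma P_in_F\<^sub>0: "P \<in> F\<^sub>0"
proof (rule gen_base)
  have "smF 1 (fpow P 0) = P"
    using ncps unfolding ncps_Bp_def cplx_alg_def by simp
  then have "P \<in> FP smF P"
    unfolding FP_def by (metis (mono_tags, lifting) mem_Collect_eq)
  then show "P \<in> (\<Union>j\<in>insert None (Some ` I). case j of None \<Rightarrow> FP smF P | Some i \<Rightarrow> F i)"
    by auto
qed

lemma scale_last_in_F\<^sub>0_A\<^sub>0: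
  "\<forall>x\<in>set gs. fst x \<in> F\<^sub>0 \<and> snd x \<in> A\<^sub>0 \<Longrightarrow> gs \<noteq> [] \<Longrightarrow> a \<in> A\<^sub>0 \<Longrightarrow>
    \<forall>x\<in>set (scale_last gs a). fst x \<in> F\<^sub>0 \<and> snd x \<in> A\<^sub>0"
  using last_in_set[of gs] by (intro scale_last_in) (auto intro: gen_mul)

lemma \<Phi>_gword:
  assumes "gs \<noteq> []" "\<forall>x\<in>set gs. fst x \<in> F\<^sub>0 \<and> snd x \<in> A\<^sub>0"
  shows "\<Phi> (gword rA gs) = (\<Prod>x\<leftarrow>gs. \<phi> (snd x)) * \<Phi> (fprod (map fst gs))"
proof -
  have "\<Phi> (lA 1 (gword rA gs)) =
      \<phi> (1 * snd (last gs)) * (\<Prod>x\<leftarrow>butlast gs. \<phi> (snd x)) * \<Phi> (fprod (map fst gs))"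
    using weakly_free[unfolded weakly_Bp_free_def Let_def, THEN conjunct2, rule_format, of gs 1]
      assms one_in_A\<^sub>0
    by blast
  then show ?thesis
    using prod_list_butlast_last[OF assms(1), of "\<lambda>x. \<phi> (snd x)"] by (simp add: lA_one mult_ac)
qed

text \<open>A triple (i, a, ws) encodes the element a + words_val ws of B i.\<close>
definition rep_val :: "'i \<times> 'a \<times> ('a, 'f) word list \<Rightarrow> 'a \<times> 'f" where
  "rep_val t = (fst (snd t), words_val (snd (snd t)))"

definition rep_proj :: "'i \<times> 'a \<times> ('a, 'f) word list \<Rightarrow> 'f" where
  "rep_proj t = words_proj (snd (snd t))"

definition centered_reps :: "('i \<times> 'a \<times> ('a, 'f) word list) list \<Rightarrow> bool" where
  "centered_reps ts \<longleftrightarrow> successively (\<noteq>) (map fst ts) \<and>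
     (\<forall>(i, a, ws)\<in>set ts. i \<in> I \<and> a \<in> centered i \<and> (\<forall>w\<in>set ws. word_in i w))"

lemma centered_reps_ConsD:
  assumes "centered_reps ((i, a, ws) # ts)"
  shows "i \<in> I" "a \<in> centered i" "\<forall>w\<in>set ws. word_in i w" "centered_reps ts"
    "ts \<noteq> [] \<Longrightarrow> fst (hd ts) \<in> I \<and> fst (hd ts) \<noteq> i"
  using assms unfolding centered_reps_def by (cases ts; auto)+

lemma \<Phi>_times_gword_bprod:
  assumes "centered_reps ts" "gs \<noteq> []" "\<forall>x\<in>set gs. fst x \<in> F\<^sub>0 \<and> snd x \<in> A\<^sub>0"
    "ts \<noteq> [] \<Longrightarrow> free_before (fst (hd ts)) (snd (last gs))"
  shows "\<Phi>_times (gword rA gs) (bprod lA rA (map rep_val ts)) =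
    (\<Prod>x\<leftarrow>gs. \<phi> (snd x)) * \<Phi> (fprod (map fst gs @ map rep_proj ts))"
  using assms
proof (induction ts arbitrary: gs)
  case Nil
  then show ?case
    by (simp add: bprod_def \<Phi>_times_unit \<Phi>_gword)
next
  case (Cons t ts)
  obtain i a ws where t: "t = (i, a, ws)"
    by (cases t)
  note t_props = centered_reps_ConsD[OF Cons.prems(1)[unfolded t]]
  define y where "y = snd (last gs)"
  define R where "R = bprod lA rA (map rep_val ts)"
  have y: "free_before i y"
    using Cons.prems(4) unfolding t y_def by simp
  have split: "\<Phi>_times (gword rA gs) (bprod lA rA (map rep_val (t # ts))) =
      \<Phi>_times (gword rA (scale_last gs a)) R +
      (\<Sum>w\<leftarrow>ws. \<Phi>_times (gword rA (scale_last gs (fst w) @ snd w)) R)"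
    using \<Phi>_times_gword_bmul[OF Cons.prems(2)] t_props(3)
    by (simp add: t R_def bprod_def rep_val_def word_in_def)
  \<comment> \<open>The A-part a joins the last coefficient y, and \<phi> (y * a) = 0 kills the term.\<close>
  have vanish: "\<Phi>_times (gword rA (scale_last gs a)) R = 0"
  proof -
    have "\<phi> (y * a) = 0"
      using free_beforeD[OF y] t_props(2) by simp
    moreover have "\<forall>x\<in>set (scale_last gs a). fst x \<in> F\<^sub>0 \<and> snd x \<in> A\<^sub>0"
      using scale_last_in_F\<^sub>0_A\<^sub>0[OF Cons.prems(3,2)] A_sub_A\<^sub>0[OF t_props(1)] t_props(2) by blast
    moreover have "ts \<noteq> [] \<Longrightarrow> free_before (fst (hd ts)) (y * a)"
      using free_before_step[OF y t_props(1,2)] t_props(5) by blast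
    ultimately show ?thesis
      using Cons.IH[OF t_props(4) scale_last_not_Nil] Cons.prems(2)
      by (simp add: R_def y_def scale_last_def prod_scale_last)
  qed
  \<comment> \<open>The new last coefficient lies in A i, hence is free before the next index.\<close>
  have word: "\<Phi>_times (gword rA (scale_last gs (fst w) @ snd w)) R =
      (\<Prod>x\<leftarrow>gs. \<phi> (snd x)) * (\<phi> (fst w) * (\<Prod>x\<leftarrow>snd w. \<phi> (snd x)) *
        \<Phi> (fprod (map fst gs @ map fst (snd w) @ map rep_proj ts)))"
    if w: "w \<in> set ws" for w
  proof -
    have w_in: "word_in i w"
      using t_props(3) w by blast
    then have last_w: "fst (last (snd w)) \<in> F i" "snd (last (snd w)) \<in> A i"
      using last_in_set[of "snd w"] unfolding word_in_def by auto
    have "\<forall>x\<in>set (scale_last gs (fst w)). fst x \<in> F\<^sub>0 \<and> snd x \<in> A\<^sub>0"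
      using scale_last_in_F\<^sub>0_A\<^sub>0[OF Cons.prems(3,2)] A_sub_A\<^sub>0[OF t_props(1)] w_in
      unfolding word_in_def by blast
    then have "\<forall>x\<in>set (scale_last gs (fst w) @ snd w). fst x \<in> F\<^sub>0 \<and> snd x \<in> A\<^sub>0"
      using A_sub_A\<^sub>0[OF t_props(1)] F_sub_F\<^sub>0[OF t_props(1)] w_in unfolding word_in_def by auto
    moreover have "ts \<noteq> [] \<Longrightarrow> free_before (fst (hd ts)) (snd (last (snd w)))"
      using free_before_distinct[OF t_props(1)] t_props(5) last_w by blast
    moreover have "\<phi> (y * fst w) = \<phi> y * \<phi> (fst w)"
      using free_beforeD[OF y] w_in unfolding word_in_def by blast
    ultimately show ?thesis
      using Cons.IH[OF t_props(4)] Cons.prems(2) w_in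
        prod_list_butlast_last[OF Cons.prems(2), of "\<lambda>x. \<phi> (snd x)"]
      by (simp add: R_def y_def word_in_def prod_scale_last map_fst_scale_last mult_ac)
  qed
  have "(\<Sum>w\<leftarrow>ws. \<Phi>_times (gword rA (scale_last gs (fst w) @ snd w)) R) =
      (\<Prod>x\<leftarrow>gs. \<phi> (snd x)) * (\<Sum>w\<leftarrow>ws. \<phi> (fst w) * (\<Prod>x\<leftarrow>snd w. \<phi> (snd x)) *
        \<Phi> (fprod (map fst gs @ map fst (snd w) @ map rep_proj ts)))"
    by (simp add: word sum_list_const_mult cong: map_cong)
  also have "\<dots> = (\<Prod>x\<leftarrow>gs. \<phi> (snd x)) * \<Phi> (fprod (map fst gs @ map rep_proj (t # ts)))"
    using \<Phi>_fprod_words_proj[of "map fst gs" ws "map rep_proj ts"] Cons.prems(2) t_props(3)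
    by (simp add: t rep_proj_def word_in_def)
  finally show ?case
    using split vanish by simp
qed

lemma phiP_eq_\<Phi>_times: "phiP lA rA \<Phi> P b = \<Phi>_times P b / \<Phi> P"
  by (simp add: phiP_def \<Phi>_times_def)

text \<open>Under \<phi>_P, a centered alternating product only sees the images of its factors under the
  expectations onto the algebras F i.\<close>
lemma phiP_bprod_rep_val:
  assumes "centered_reps ts"
  shows "phiP lA rA \<Phi> P (bprod lA rA (map rep_val ts)) =
    phiP lA rA \<Phi> P (bprod lA rA (map (\<lambda>t. (0, rep_proj t)) ts))"
proof (cases "ts = []")
  case False
  have "\<Phi>_times (gword rA [(P, 1)]) (bprod lA rA (map rep_val ts)) =
      \<phi> 1 * \<Phi> (fprod (P # map rep_proj ts))"
    using \<Phi>_times_gword_bprod[OF assms, of "[(P, 1)]"] P_in_F\<^sub>0 one_in_A\<^sub>0 free_before_one by simp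
  moreover have "bprod lA rA (map (\<lambda>t. (0, rep_proj t)) ts) = (0, fprod (map rep_proj ts))"
    using bprod_map_zero[of "map rep_proj ts"] False by (simp add: comp_def)
  ultimately show ?thesis
    using False by (simp add: phiP_eq_\<Phi>_times \<Phi>_times_F rA_one \<phi>_one fprod_Cons)
qed simp

lemma alternating_Balg_reps:
  assumes "alternating xs I Balg" "\<forall>(i, b)\<in>set xs. phiB \<phi> b = 0"
  obtains ts where "xs = map (\<lambda>t. (fst t, rep_val t)) ts" "centered_reps ts"
proof -
  have "\<forall>x\<in>set xs. \<exists>ws. snd (snd x) = words_val ws \<and> (\<forall>w\<in>set ws. word_in (fst x) w)"
    using assms(1) Balg_decomp unfolding alternating_def word_span_def by fastforce
  then obtain rep where rep:
    "\<forall>x\<in>set xs. snd (snd x) = words_val (rep x) \<and> (\<forall>w\<in>set (rep x). word_in (fst x) w)"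
    by metis
  define ts where "ts = map (\<lambda>x. (fst x, fst (snd x), rep x)) xs"
  have "xs = map (\<lambda>t. (fst t, rep_val t)) ts"
    using rep unfolding ts_def rep_val_def by (simp add: comp_def map_idI prod_eq_iff)
  moreover have "centered_reps ts"
    using assms rep Balg_decomp unfolding ts_def centered_reps_def alternating_def phiB_def
    by (auto simp: comp_def)
  ultimately show ?thesis
    using that by blast
qed

lemma free_Balg: "free_wrt (bprod lA rA) (phiB \<phi>) Balg I"
  unfolding free_wrt_def
proof (intro allI impI)
  fix xs :: "('i \<times> 'a \<times> 'f) list"
  assume alt: "alternating xs I Balg" and centered: "\<forall>(i, b)\<in>set xs. phiB \<phi> b = 0"
  have "alternating (map (\<lambda>x. (fst x, fst (snd x))) xs) I centered"
    using alt centered Balg_decomp unfolding alternating_def phiB_def by (auto simp: comp_def)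
  then show "phiB \<phi> (bprod lA rA (map snd xs)) = 0"
    using \<phi>_alternating_centered unfolding phiB_def fst_bprod by (fastforce simp: comp_def)
qed

lemma boolean_indep_if_cond_free:
  assumes "cond_free (bprod lA rA) (phiB \<phi>) (phiP lA rA \<Phi> P) Balg I"
  shows "boolean_indep (bprod lA rA) (phiP lA rA \<Phi> P) (\<lambda>i. (\<lambda>f. (0, f)) ` F i) I"
  unfolding boolean_indep_def
proof (intro allI impI)
  fix xs :: "('i \<times> 'a \<times> 'f) list"
  assume alt: "alternating xs I (\<lambda>i. (\<lambda>f. (0, f)) ` F i)"
  then have "alternating xs I Balg"
    using A_closed(1) unfolding alternating_def by (fastforce intro: gen_base)
  moreover have "\<forall>(i, b)\<in>set xs. phiB \<phi> b = 0"
    using alt unfolding alternating_def phiB_def by (auto simp: \<phi>_zero)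
  ultimately show "phiP lA rA \<Phi> P (bprod lA rA (map snd xs)) = (\<Prod>x\<leftarrow>xs. phiP lA rA \<Phi> P (snd x))"
    using assms unfolding cond_free_def by blast
qed

lemma cond_free_if_boolean_indep:
  assumes indep: "boolean_indep (bprod lA rA) (phiP lA rA \<Phi> P) (\<lambda>i. (\<lambda>f. (0, f)) ` F i) I"
  shows "cond_free (bprod lA rA) (phiB \<phi>) (phiP lA rA \<Phi> P) Balg I"
  unfolding cond_free_def
proof (intro conjI allI impI free_Balg)
  fix xs :: "('i \<times> 'a \<times> 'f) list"
  assume "alternating xs I Balg" "\<forall>(i, b)\<in>set xs. phiB \<phi> b = 0"
  then obtain ts where xs: "xs = map (\<lambda>t. (fst t, rep_val t)) ts" and ts: "centered_reps ts"
    by (rule alternating_Balg_reps)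
  have "alternating (map (\<lambda>t. (fst t, (0, rep_proj t))) ts) I (\<lambda>i. (\<lambda>f. (0, f)) ` F i)"
    using \<open>alternating xs I Balg\<close> ts words_proj_in_F
    unfolding xs alternating_def centered_reps_def rep_proj_def by (auto simp: comp_def)
  then have "phiP lA rA \<Phi> P (bprod lA rA (map (\<lambda>t. (0, rep_proj t)) ts)) =
      (\<Prod>t\<leftarrow>ts. phiP lA rA \<Phi> P (0, rep_proj t))"
    using indep unfolding boolean_indep_def by (force simp: comp_def)
  moreover have "phiP lA rA \<Phi> P (0, rep_proj t) = phiP lA rA \<Phi> P (rep_val t)" if "t \<in> set ts" for t
    using phiP_bprod_rep_val[of "[t]"] ts that unfolding centered_reps_def
    by (simp add: bprod_def bmul_def rA_one)
  ultimately show "phiP lA rA \<Phi> P (bprod lA rA (map snd xs)) = (\<Prod>x\<leftarrow>xs. phiP lA rA \<Phi> P (snd x))"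
    using phiP_bprod_rep_val[OF ts] unfolding xs by (simp add: comp_def cong: map_cong)
qed

end

theorem theorem4p3:
  fixes smA :: "complex \<Rightarrow> 'a::ring_1 \<Rightarrow> 'a" and \<phi> :: "'a \<Rightarrow> complex"
    and smF :: "complex \<Rightarrow> 'f::ring \<Rightarrow> 'f" and lA :: "'a \<Rightarrow> 'f \<Rightarrow> 'f" and rA :: "'f \<Rightarrow> 'a \<Rightarrow> 'f"
    and \<Phi> :: "'f \<Rightarrow> complex"
    and I :: "'i set" and A :: "'i \<Rightarrow> 'a set" and F :: "'i \<Rightarrow> 'f set" and P :: 'f
  assumes ncps: "ncps_Bp smA \<phi> smF lA rA \<Phi>"
    and subA: "\<And>i. i \<in> I \<Longrightarrow> subalg 0 (+) smA (*) (A i) \<and> 1 \<in> A i"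
    and subF: "\<And>i. i \<in> I \<Longrightarrow> subalg 0 (+) smF (*) (F i)"
    and PhiP: "\<Phi> P \<noteq> 0"
    and wfree: "weakly_Bp_free smA \<phi> smF lA rA \<Phi> A I
                  (\<lambda>j. case j of None \<Rightarrow> FP smF P | Some i \<Rightarrow> F i) (insert None (Some ` I))"
  shows "cond_free (bprod lA rA) (phiB \<phi>) (phiP lA rA \<Phi> P)
           (\<lambda>i. gen_alg (0, 0) badd (bsm smA smF) (bmul lA rA) {(a, f). a \<in> A i \<and> f \<in> F i}) I
         \<longleftrightarrow> boolean_indep (bprod lA rA) (phiP lA rA \<Phi> P) (\<lambda>i. (\<lambda>f. (0, f)) ` F i) I"
proof -
  interpret Bp_free_setting smA \<phi> smF lA rA \<Phi> I A F P
    by (rule Bp_free_setting.intro[OF ncps_Bp_space.intro[OF ncps]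
          Bp_free_setting_axioms.intro[OF subA subF wfree]])
  show ?thesis
    using boolean_indep_if_cond_free cond_free_if_boolean_indep by blast
qed

end
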